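(* Let $s_0\in(0,1)$ and let $\varphi:[0,\infty)\to(0,\infty)$ be a deterministic (measurable) function with $\int_0^\infty\varphi(s)\,ds<\infty$. Let $(P_t)_{t\ge0}$ be a stochastic process with almost surely continuous, positive sample paths such that $\sup_{t\ge0}\mathbb{E}[P_t]\le M<\infty$ for some constant $M$. Set $\beta_t=\varphi(t)P_t$ and let $(S_t)_{t\ge0}$ be the solution of $$\frac{dS_t}{dt}=-\beta_t S_t(1-S_t),\qquad S_0=s_0,$$ namely $S_t=\left[1+\left(\frac{1}{s_0}-1\right)\exp\left(\int_0^t\beta_r\,dr\right)\right]^{-1}$. Then the limit $S_\infty=\lim_{t\to\infty}S_t$ satisfies $S_\infty\in(0,s_0)$ almost surely.
   Context: This is an SI epidemic model with population normalized to one; $S_t$ is the susceptible fraction, $\varphi$ models a public health intervention and $P_t$ the random transmission rate in the absence of intervention. The intervention is called successful when $\int_0^\infty\varphi(s)\,ds<\infty$. *)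

theory Defs
  imports "HOL-Probability.Probability"
begin

definition SI_solution ::
  "real \<Rightarrow> (real \<Rightarrow> real) \<Rightarrow> (real \<Rightarrow> 'a \<Rightarrow> real) \<Rightarrow> real \<Rightarrow> 'a \<Rightarrow> real" where
  "SI_solution s0 \<phi> P t w =
     1 / (1 + (1 / s0 - 1) * exp (LBINT r=0..t. \<phi> r * P r w))"

end

theory Submission
  imports Defs
begin

text \<open>The explicit solution S_t is a decreasing logistic function of the cumulative
  transmission B_t = \<integral>[0,t] \<phi> P, so S_\<infinity> lies in (0, s0) on every path where B_t has
  a finite positive limit. Finiteness holds almost surely
  because, by Tonelli, E[\<integral>[0,\<infinity>) \<phi> P] = \<integral>[0,\<infinity>) \<phi> E[P] \<le> Mb \<integral>[0,\<infinity>) \<phi> < \<infinity>.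
  Tonelli needs joint measurability of (w, r) \<mapsto> P r w, which is obtained by replacing
  P with the liminf of its values along finer and finer grids; this version agrees
  with P on every continuous path.\<close>

lemma logistic_bounds:
  fixes s0 I :: real
  assumes "0 < s0" "s0 < 1" "0 < I"
  shows "0 < 1 / (1 + (1 / s0 - 1) * exp I)" and "1 / (1 + (1 / s0 - 1) * exp I) < s0"
proof -
  have c: "0 < 1 / s0 - 1" using assms by (simp add: field_simps)
  then show "0 < 1 / (1 + (1 / s0 - 1) * exp I)" by (simp add: add_pos_pos)
  have "1 / s0 - 1 < (1 / s0 - 1) * exp I" using c \<open>0 < I\<close> by simp
  then have "1 / s0 < 1 + (1 / s0 - 1) * exp I" by simp
  moreover have "0 < 1 / s0" using \<open>0 < s0\<close> by simp
  ultimately have "1 / (1 + (1 / s0 - 1) * exp I) < 1 / (1 / s0)"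
    by (intro frac_less2) auto
  then show "1 / (1 + (1 / s0 - 1) * exp I) < s0" by simp
qed

lemma set_integral_pos:
  fixes f :: "'a \<Rightarrow> real"
  assumes int: "set_integrable M A f" and A: "A \<in> sets M" "emeasure M A \<noteq> 0"
    and pos: "\<forall>x\<in>A. 0 < f x"
  shows "0 < (LINT x:A|M. f x)"
proof -
  have nonneg: "0 \<le> indicator A x *\<^sub>R f x" for x
    using pos by (simp add: indicator_def less_imp_le)
  have "(LINT x:A|M. f x) \<noteq> 0"
  proof
    assume "(LINT x:A|M. f x) = 0"
    then have "AE x in M. indicator A x *\<^sub>R f x = 0"
      using int nonneg unfolding set_integrable_def set_lebesgue_integral_def
      by (subst (asm) integral_nonneg_eq_0_iff_AE) auto
    then have "AE x in M. x \<notin> A"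
      by eventually_elim (use pos in \<open>auto simp: indicator_def split: if_splits\<close>)
    then show False
      using A sets.sets_into_space[OF A(1)] by (subst (asm) AE_iff_measurable[where N=A]) auto
  qed
  moreover have "0 \<le> (LINT x:A|M. f x)"
    unfolding set_lebesgue_integral_def using nonneg by (rule Bochner_Integration.integral_nonneg)
  ultimately show ?thesis by simp
qed

lemma tendsto_interval_integral_at_top:
  fixes f :: "real \<Rightarrow> 'a::{banach, second_countable_topology}"
  assumes "set_integrable lborel {a..} f"
  shows "((\<lambda>t. LBINT r=ereal a..ereal t. f r) \<longlongrightarrow> (LBINT r:{a..}. f r)) at_top"
proof -
  have "\<forall>\<^sub>F t in at_top. (LBINT r:{a..t}. f r) = (LBINT r=ereal a..ereal t. f r)"
    using eventually_ge_at_top[of a] by eventually_elim (simp add: interval_integral_Icc)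
  with tendsto_set_lebesgue_integral_at_top[OF _ assms] show ?thesis
    by (auto intro: Lim_transform_eventually)
qed

lemma SI_solution_limit_bounds:
  assumes s0: "0 < s0" "s0 < 1"
    and int: "set_integrable lborel {0..} (\<lambda>r. \<phi> r * P r w)"
    and pos: "\<forall>r\<ge>0. 0 < \<phi> r * P r w"
  shows "\<exists>L. ((\<lambda>t. SI_solution s0 \<phi> P t w) \<longlongrightarrow> L) at_top \<and> 0 < L \<and> L < s0"
proof -
  define I where "I = (LBINT r:{0..}. \<phi> r * P r w)"
  have "emeasure lborel {0::real..} \<noteq> 0"
    using emeasure_mono[of "{0..1::real}" "{0..}" lborel] by auto
  then have "0 < I"
    unfolding I_def by (rule set_integral_pos[OF int, rotated]) (use pos in auto)
  have "((\<lambda>t. LBINT r=0..ereal t. \<phi> r * P r w) \<longlongrightarrow> I) at_top"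
    unfolding I_def zero_ereal_def by (rule tendsto_interval_integral_at_top[OF int])
  then have "((\<lambda>t. SI_solution s0 \<phi> P t w) \<longlongrightarrow> 1 / (1 + (1 / s0 - 1) * exp I)) at_top"
    unfolding SI_solution_def using logistic_bounds(1)[OF s0 \<open>0 < I\<close>]
    by (intro tendsto_intros) auto
  with logistic_bounds[OF s0 \<open>0 < I\<close>] show ?thesis by blast
qed

lemma set_integrable_mult_continuous_on:
  fixes \<phi> p :: "real \<Rightarrow> real"
  assumes A: "A \<in> sets borel" and \<phi>: "set_integrable lborel A \<phi>" and p: "continuous_on A p"
    and nonneg: "\<forall>r\<in>A. 0 \<le> \<phi> r \<and> 0 \<le> p r"
    and fin: "(\<integral>\<^sup>+r. ennreal (indicator A r * \<phi> r) * ennreal (p r) \<partial>lborel) < \<infinity>"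
  shows "set_integrable lborel A (\<lambda>r. \<phi> r * p r)"
  unfolding set_integrable_def
proof (rule integrableI_nonneg)
  have "(\<lambda>r. indicator A r * \<phi> r) \<in> borel_measurable lborel"
    using \<phi> by (simp add: set_integrable_def)
  moreover have "(\<lambda>r. indicator A r *\<^sub>R p r) \<in> borel_measurable lborel"
    using borel_measurable_continuous_on_indicator[OF A p] by simp
  ultimately have "(\<lambda>r. (indicator A r * \<phi> r) * (indicator A r *\<^sub>R p r)) \<in> borel_measurable lborel"
    by measurable
  moreover have "(\<lambda>r. (indicator A r * \<phi> r) * (indicator A r *\<^sub>R p r))
      = (\<lambda>r. indicator A r *\<^sub>R (\<phi> r * p r))"
    by (simp add: indicator_def fun_eq_iff)
  ultimately show "(\<lambda>r. indicator A r *\<^sub>R (\<phi> r * p r)) \<in> borel_measurable lborel"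
    by simp
  show "AE r in lborel. 0 \<le> indicator A r *\<^sub>R (\<phi> r * p r)"
    using nonneg by (simp add: indicator_def)
  have "(\<integral>\<^sup>+r. ennreal (indicator A r *\<^sub>R (\<phi> r * p r)) \<partial>lborel)
      = (\<integral>\<^sup>+r. ennreal (indicator A r * \<phi> r) * ennreal (p r) \<partial>lborel)"
    using nonneg by (intro nn_integral_cong) (auto simp: indicator_def ennreal_mult)
  with fin show "(\<integral>\<^sup>+r. ennreal (indicator A r *\<^sub>R (\<phi> r * p r)) \<partial>lborel) < \<infinity>"
    by simp
qed

text \<open>Each grid_floor n takes only countably many values, all nonnegative, so composing
  P with it preserves measurability in the time variable.\<close>

definition grid_floor :: "nat \<Rightarrow> real \<Rightarrow> real" where
  "grid_floor n r = real (nat \<lfloor>r * real (Suc n)\<rfloor>) / real (Suc n)"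

lemma grid_floor_nonneg [simp]: "0 \<le> grid_floor n r"
  by (simp add: grid_floor_def)

lemma grid_floor_bounds:
  assumes "0 \<le> r"
  shows "r - 1 / real (Suc n) \<le> grid_floor n r" and "grid_floor n r \<le> r"
proof -
  have eq: "grid_floor n r = of_int \<lfloor>r * real (Suc n)\<rfloor> / real (Suc n)"
    using assms by (simp add: grid_floor_def)
  have "(r * real (Suc n) - 1) / real (Suc n) \<le> of_int \<lfloor>r * real (Suc n)\<rfloor> / real (Suc n)"
    by (intro divide_right_mono) linarith+
  then show "r - 1 / real (Suc n) \<le> grid_floor n r"
    unfolding eq by (simp add: diff_divide_distrib)
  have "of_int \<lfloor>r * real (Suc n)\<rfloor> / real (Suc n) \<le> (r * real (Suc n)) / real (Suc n)"
    by (intro divide_right_mono) linarith+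
  then show "grid_floor n r \<le> r"
    unfolding eq by simp
qed

lemma LIMSEQ_grid_floor:
  assumes "0 \<le> r"
  shows "(\<lambda>n. grid_floor n r) \<longlonglongrightarrow> r"
proof (rule tendsto_sandwich)
  show "(\<lambda>n. r - 1 / real (Suc n)) \<longlonglongrightarrow> r"
    using tendsto_diff[OF tendsto_const LIMSEQ_inverse_real_of_nat, of r] by (simp add: inverse_eq_divide)
qed (use grid_floor_bounds[OF assms] in auto)

lemma jointly_measurable_version:
  fixes P :: "real \<Rightarrow> 'a \<Rightarrow> real"
  assumes meas: "\<forall>t\<ge>0. P t \<in> borel_measurable M"
  obtains Q :: "'a \<Rightarrow> real \<Rightarrow> ennreal"
  where "(\<lambda>(w, r). Q w r) \<in> borel_measurable (M \<Otimes>\<^sub>M lborel)"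
    and "\<And>w r. continuous_on {0..} (\<lambda>t. P t w) \<Longrightarrow> 0 \<le> r \<Longrightarrow> Q w r = ennreal (P r w)"
proof
  define Q where "Q w r = liminf (\<lambda>n. ennreal (P (grid_floor n r) w))" for w r
  have "(\<lambda>x. ennreal (P (grid_floor n (snd x)) (fst x))) \<in> borel_measurable (M \<Otimes>\<^sub>M lborel)" for n
    unfolding grid_floor_def
  proof (rule measurable_compose_countable[where g="\<lambda>x. nat \<lfloor>snd x * real (Suc n)\<rfloor>"])
    fix k :: nat
    have "P (real k / real (Suc n)) \<in> borel_measurable M" using meas by simp
    then show "(\<lambda>x. ennreal (P (real k / real (Suc n)) (fst x))) \<in> borel_measurable (M \<Otimes>\<^sub>M lborel)"
      by measurable
  qed measurable
  then show "(\<lambda>(w, r). Q w r) \<in> borel_measurable (M \<Otimes>\<^sub>M lborel)"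
    unfolding Q_def case_prod_beta' by (rule borel_measurable_liminf)
  fix w and r :: real
  assume "continuous_on {0..} (\<lambda>t. P t w)" "0 \<le> r"
  then have "(\<lambda>n. P (grid_floor n r) w) \<longlonglongrightarrow> P r w"
    by (intro continuous_on_tendsto_compose[OF _ LIMSEQ_grid_floor]) auto
  then show "Q w r = ennreal (P r w)"
    unfolding Q_def by (intro lim_imp_Liminf tendsto_ennrealI) simp_all
qed

lemma AE_weighted_path_integral_finite:
  fixes M :: "'a measure" and P :: "real \<Rightarrow> 'a \<Rightarrow> real" and \<phi> :: "real \<Rightarrow> real"
  assumes "sigma_finite_measure M"
    and meas: "\<forall>t\<ge>0. P t \<in> borel_measurable M"
    and cont: "AE w in M. continuous_on {0..} (\<lambda>t. P t w)"
    and bound: "\<forall>t\<ge>0. (\<integral>\<^sup>+ w. ennreal (P t w) \<partial>M) \<le> ennreal Mb"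
    and \<phi>: "set_integrable lborel {0..} \<phi>"
  shows "AE w in M. (\<integral>\<^sup>+r. ennreal (indicator {0..} r * \<phi> r) * ennreal (P r w) \<partial>lborel) < \<infinity>"
proof -
  interpret pair_sigma_finite M lborel
    by (simp add: pair_sigma_finite_def assms(1) lborel.sigma_finite_measure_axioms)
  obtain Q where Q_meas: "(\<lambda>(w, r). Q w r) \<in> borel_measurable (M \<Otimes>\<^sub>M lborel)"
    and Q_eq: "\<And>w r. continuous_on {0..} (\<lambda>t. P t w) \<Longrightarrow> 0 \<le> r \<Longrightarrow> Q w r = ennreal (P r w)"
    using jointly_measurable_version[OF meas] by blast
  define \<psi> where "\<psi> r = ennreal (indicator {0..} r * \<phi> r)" for r
  have \<psi>_meas: "\<psi> \<in> borel_measurable lborel"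
    using \<phi> unfolding \<psi>_def set_integrable_def by simp
  have "(\<integral>\<^sup>+r. \<psi> r \<partial>lborel) \<le> (\<integral>\<^sup>+r. norm (indicator {0..} r *\<^sub>R \<phi> r) \<partial>lborel)"
    unfolding \<psi>_def by (intro nn_integral_mono ennreal_leI) simp
  also have "\<dots> < \<infinity>"
    using \<phi> by (simp add: set_integrable_def integrable_iff_bounded)
  finally have \<psi>_fin: "(\<integral>\<^sup>+r. \<psi> r \<partial>lborel) < \<infinity>" .
  have E_Q: "(\<integral>\<^sup>+w. Q w r \<partial>M) \<le> ennreal Mb" if "0 \<le> r" for r
  proof -
    have "(\<integral>\<^sup>+w. Q w r \<partial>M) = (\<integral>\<^sup>+w. ennreal (P r w) \<partial>M)"
      using cont by (intro nn_integral_cong_AE) (auto elim!: eventually_mono simp: Q_eq that)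
    with bound that show ?thesis by simp
  qed
  have F_meas: "(\<lambda>(w, r). \<psi> r * Q w r) \<in> borel_measurable (M \<Otimes>\<^sub>M lborel)"
    using Q_meas \<psi>_meas by (simp add: case_prod_beta')
  have "(\<integral>\<^sup>+w. (\<integral>\<^sup>+r. \<psi> r * Q w r \<partial>lborel) \<partial>M) = (\<integral>\<^sup>+r. (\<integral>\<^sup>+w. \<psi> r * Q w r \<partial>M) \<partial>lborel)"
    using Fubini'[OF F_meas] by simp
  also have "\<dots> \<le> (\<integral>\<^sup>+r. \<psi> r * ennreal Mb \<partial>lborel)"
  proof (intro nn_integral_mono)
    fix r :: real
    show "(\<integral>\<^sup>+w. \<psi> r * Q w r \<partial>M) \<le> \<psi> r * ennreal Mb"
    proof (cases "0 \<le> r")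
      case True
      have "(\<lambda>w. Q w r) \<in> borel_measurable M"
        using measurable_compose[OF _ Q_meas, of "\<lambda>w. (w, r)"] by simp
      then have "(\<integral>\<^sup>+w. \<psi> r * Q w r \<partial>M) = \<psi> r * (\<integral>\<^sup>+w. Q w r \<partial>M)"
        by (rule nn_integral_cmult)
      also have "\<dots> \<le> \<psi> r * ennreal Mb"
        using E_Q[OF True] by (rule mult_left_mono) simp
      finally show ?thesis .
    qed (simp add: \<psi>_def)
  qed
  also have "\<dots> = (\<integral>\<^sup>+r. \<psi> r \<partial>lborel) * ennreal Mb"
    using \<psi>_meas by (rule nn_integral_multc)
  also have "\<dots> < \<infinity>"
    using \<psi>_fin by (simp add: ennreal_mult_less_top)
  finally have "(\<integral>\<^sup>+w. (\<integral>\<^sup>+r. \<psi> r * Q w r \<partial>lborel) \<partial>M) \<noteq> \<infinity>" by simp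
  with lborel.borel_measurable_nn_integral[OF F_meas]
  have "AE w in M. (\<integral>\<^sup>+r. \<psi> r * Q w r \<partial>lborel) \<noteq> \<infinity>"
    by (intro nn_integral_PInf_AE) simp_all
  with cont show ?thesis
  proof eventually_elim
    case (elim w)
    have "(\<integral>\<^sup>+r. ennreal (indicator {0..} r * \<phi> r) * ennreal (P r w) \<partial>lborel)
        = (\<integral>\<^sup>+r. \<psi> r * Q w r \<partial>lborel)"
      by (intro nn_integral_cong) (auto simp: \<psi>_def Q_eq[OF elim(1)] indicator_def)
    with elim(2) show ?case by (simp add: top.not_eq_extremum)
  qed
qed

theorem mainTheorem2:
  fixes M :: "'a measure" and P :: "real \<Rightarrow> 'a \<Rightarrow> real"
    and \<phi> :: "real \<Rightarrow> real" and s0 Mb :: real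
  assumes "prob_space M"
    and "0 < s0" "s0 < 1"
    and "\<forall>t\<ge>0. 0 < \<phi> t"
    and "set_integrable lborel {0..} \<phi>"
    and "\<forall>t\<ge>0. P t \<in> borel_measurable M"
    and "AE w in M. continuous_on {0..} (\<lambda>t. P t w) \<and> (\<forall>t\<ge>0. 0 < P t w)"
    and "\<forall>t\<ge>0. (\<integral>\<^sup>+ w. ennreal (P t w) \<partial>M) \<le> ennreal Mb"
  shows "AE w in M. \<exists>L. ((\<lambda>t. SI_solution s0 \<phi> P t w) \<longlongrightarrow> L) at_top
                        \<and> 0 < L \<and> L < s0"
proof -
  interpret prob_space M by fact
  have "AE w in M. (\<integral>\<^sup>+r. ennreal (indicator {0..} r * \<phi> r) * ennreal (P r w) \<partial>lborel) < \<infinity>"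
    using assms(7) by (intro AE_weighted_path_integral_finite[OF _ assms(6) _ assms(8,5)])
      (auto elim: eventually_mono simp: sigma_finite_measure_axioms)
  with assms(7) show ?thesis
  proof eventually_elim
    case (elim w)
    then have "set_integrable lborel {0..} (\<lambda>r. \<phi> r * P r w)"
      using assms(4,5) by (intro set_integrable_mult_continuous_on) (auto simp: less_imp_le)
    with elim(1) assms(2-4) show ?case
      by (intro SI_solution_limit_bounds) auto
  qed
qed

end
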